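(* Let $R$ be a (unital, not necessarily associative) ring and let $\sigma\colon R\to R$ be an additive bijection with $\sigma(1)=1$. Let $S=R[X^{\pm};\sigma]$ and let $T=R[X;\sigma,0]\subseteq S$. If $I$ is a left ideal of $S$, then $I=S(I\cap T)$. If $I$ is a right ideal of $S$, then $I=(I\cap T)S$.
   Context: A left (right) ideal of a non-associative ring $S$ is an additive subgroup $I$ with $sI\subseteq I$ ($Is\subseteq I$) for all $s\in S$. $S=R[X^{\pm};\sigma]$ is the additive group of formal sums $\sum_{i\in\mathbb{Z}} r_iX^i$ ($r_i\in R$, finitely many non-zero) with pointwise addition and multiplication the biadditive extension of $(rX^m)(sX^n)=(r\sigma^m(s))X^{m+n}$ for $r,s\in R$, $m,n\in\mathbb{Z}$. $T=R[X;\sigma,0]$ is the subset of $S$ of elements with $r_i=0$ for all $i<0$ (with the same multiplication, i.e. the non-associative Ore extension with $\delta=0$). For subsets $A,B\subseteq S$, $AB$ denotes the set of finite sums $\sum a_kb_k$ with $a_k\in A$, $b_k\in B$. *)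

theory Defs
  imports Main
begin

class nonassoc_ring_1 = ab_group_add + times + one +
  assumes na_distrib_left: "a * (b + c) = a * b + a * c"
    and na_distrib_right: "(a + b) * c = a * c + b * c"
    and na_mult_1_left: "1 * a = a"
    and na_mult_1_right: "a * 1 = a"

text \<open>Elements of R[X^{+-};sigma] are represented by their coefficient functions
int => R with finite support.\<close>
definition lpoly :: "(int \<Rightarrow> 'a::zero) set" where
  "lpoly = {f. finite {i. f i \<noteq> 0}}"

definition tpoly :: "(int \<Rightarrow> 'a::zero) set" where
  "tpoly = {f \<in> lpoly. \<forall>i<0. f i = 0}"

definition sig_pow :: "('a \<Rightarrow> 'a) \<Rightarrow> int \<Rightarrow> 'a \<Rightarrow> 'a" where
  "sig_pow \<sigma> m = (if 0 \<le> m then \<sigma> ^^ nat m else inv \<sigma> ^^ nat (- m))"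

text \<open>Multiplication: biadditive extension of (r X^m)(s X^n) = (r sigma^m(s)) X^(m+n).\<close>
definition lmult :: "('a::nonassoc_ring_1 \<Rightarrow> 'a) \<Rightarrow> (int \<Rightarrow> 'a) \<Rightarrow> (int \<Rightarrow> 'a) \<Rightarrow> (int \<Rightarrow> 'a)" where
  "lmult \<sigma> f g = (\<lambda>n. \<Sum>m\<in>{m. f m \<noteq> 0}. f m * sig_pow \<sigma> m (g (n - m)))"

definition add_subgroup :: "(int \<Rightarrow> 'a::ab_group_add) set \<Rightarrow> bool" where
  "add_subgroup I \<longleftrightarrow> I \<subseteq> lpoly \<and> (\<lambda>_. 0) \<in> I \<and>
     (\<forall>x\<in>I. \<forall>y\<in>I. (\<lambda>n. x n - y n) \<in> I)"

definition left_ideal :: "('a::nonassoc_ring_1 \<Rightarrow> 'a) \<Rightarrow> (int \<Rightarrow> 'a) set \<Rightarrow> bool" where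
  "left_ideal \<sigma> I \<longleftrightarrow> add_subgroup I \<and> (\<forall>s\<in>lpoly. \<forall>x\<in>I. lmult \<sigma> s x \<in> I)"

definition right_ideal :: "('a::nonassoc_ring_1 \<Rightarrow> 'a) \<Rightarrow> (int \<Rightarrow> 'a) set \<Rightarrow> bool" where
  "right_ideal \<sigma> I \<longleftrightarrow> add_subgroup I \<and> (\<forall>s\<in>lpoly. \<forall>x\<in>I. lmult \<sigma> x s \<in> I)"

definition set_prod :: "('a::nonassoc_ring_1 \<Rightarrow> 'a) \<Rightarrow> (int \<Rightarrow> 'a) set \<Rightarrow> (int \<Rightarrow> 'a) set \<Rightarrow> (int \<Rightarrow> 'a) set" where
  "set_prod \<sigma> A B = {(\<lambda>n. \<Sum>k<N. lmult \<sigma> (a k) (b k) n) | (N::nat) a b.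
       \<forall>k<N. a k \<in> A \<and> b k \<in> B}"

end

theory Submission
  imports Defs
begin

text \<open>Every element \<open>x\<close> of \<open>S\<close> has support bounded below, so for large \<open>m \<ge> 0\<close>
  the element \<open>X^m x\<close> (resp. \<open>x X^m\<close>) of the ideal lies in \<open>T\<close>. Multiplication by
  a monomial \<open>X^k\<close> only shifts coefficients and applies \<open>\<sigma>^k\<close>, so despite the lack of
  associativity \<open>X^-m (X^m x) = x\<close> and \<open>(x X^m) X^-m = x\<close>, by \<open>\<sigma>^-m \<sigma>^m = id\<close> and
  \<open>\<sigma>^k 1 = 1\<close>. Thus every \<open>x \<in> I\<close> is a single product in \<open>S(I \<inter> T)\<close>
  (resp. \<open>(I \<inter> T)S\<close>); the reverse inclusions hold because ideals are closed under
  products and sums.\<close>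

lemma na_mult_0_left [simp]: "(0::'a::nonassoc_ring_1) * a = 0"
proof -
  have "0 * a = (0 + 0) * a" by simp
  also have "\<dots> = 0 * a + 0 * a" by (rule na_distrib_right)
  finally show ?thesis by simp
qed

lemma na_mult_0_right [simp]: "(a::'a::nonassoc_ring_1) * 0 = 0"
proof -
  have "a * 0 = a * (0 + 0)" by simp
  also have "\<dots> = a * 0 + a * 0" by (rule na_distrib_left)
  finally show ?thesis by simp
qed

lemma funpow_fixed_point: "f a = a \<Longrightarrow> (f ^^ k) a = a"
  by (induction k) auto

lemma sig_pow_fixed_point:
  assumes "inj \<sigma>" "\<sigma> a = a"
  shows "sig_pow \<sigma> k a = a"
proof -
  have "inv \<sigma> a = a" using assms by (simp add: inv_f_eq)
  with assms(2) show ?thesis by (simp add: sig_pow_def funpow_fixed_point)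
qed

lemma sig_pow_neg_cancel:
  assumes "bij \<sigma>" "0 \<le> m"
  shows "sig_pow \<sigma> (- m) (sig_pow \<sigma> m a) = a"
proof (cases "m = 0")
  case False
  with assms(2) have "sig_pow \<sigma> (- m) (sig_pow \<sigma> m a) = (inv \<sigma> ^^ nat m) ((\<sigma> ^^ nat m) a)"
    by (simp add: sig_pow_def)
  then show ?thesis using inv_fn_o_fn_is_id[OF assms(1)] by (metis comp_apply)
qed (simp add: sig_pow_def)

lemma additive_map_zero:
  fixes \<sigma> :: "'a::ab_group_add \<Rightarrow> 'a"
  assumes "\<forall>x y. \<sigma> (x + y) = \<sigma> x + \<sigma> y"
  shows "\<sigma> 0 = 0"
  using assms by (metis add_cancel_right_right)

definition xpow :: "int \<Rightarrow> int \<Rightarrow> 'a::nonassoc_ring_1" where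
  "xpow m = (\<lambda>i. if i = m then 1 else 0)"

lemma xpow_in_lpoly: "xpow m \<in> lpoly"
  unfolding lpoly_def xpow_def by (auto intro: finite_subset[of _ "{m}"])

lemma lmult_eq_sum_superset:
  assumes "finite A" "{m. f m \<noteq> 0} \<subseteq> A"
  shows "lmult \<sigma> f g n = (\<Sum>m\<in>A. f m * sig_pow \<sigma> m (g (n - m)))"
  unfolding lmult_def by (rule sum.mono_neutral_left) (use assms in auto)

lemma lmult_xpow_left: "lmult \<sigma> (xpow m) g n = sig_pow \<sigma> m (g (n - m))"
proof -
  have "lmult \<sigma> (xpow m) g n = (\<Sum>k\<in>{m}. xpow m k * sig_pow \<sigma> k (g (n - k)))"
    by (rule lmult_eq_sum_superset) (auto simp: xpow_def)
  then show ?thesis by (simp add: xpow_def na_mult_1_left)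
qed

lemma lmult_xpow_right:
  assumes "f \<in> lpoly" "\<And>k. sig_pow \<sigma> k 0 = 0" "\<And>k. sig_pow \<sigma> k 1 = 1"
  shows "lmult \<sigma> f (xpow m) n = f (n - m)"
proof -
  have "lmult \<sigma> f (xpow m) n
      = (\<Sum>k\<in>insert (n - m) {i. f i \<noteq> 0}. f k * sig_pow \<sigma> k (xpow m (n - k)))"
    by (rule lmult_eq_sum_superset) (use assms(1) in \<open>auto simp: lpoly_def\<close>)
  also have "\<dots> = (\<Sum>k\<in>insert (n - m) {i. f i \<noteq> 0}. if k = n - m then f k else 0)"
    by (rule sum.cong) (auto simp: xpow_def assms(2,3) na_mult_1_right)
  also have "\<dots> = f (n - m)" using assms(1) by (simp add: lpoly_def)
  finally show ?thesis .
qed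

lemma lpoly_support_bounded_below:
  assumes "x \<in> lpoly"
  obtains m :: int where "0 \<le> m" "\<And>i. i < - m \<Longrightarrow> x i = 0"
proof -
  obtain b where b: "\<And>i. x i \<noteq> 0 \<Longrightarrow> b \<le> i"
    using bdd_below_finite[of "{i. x i \<noteq> 0}"] assms unfolding lpoly_def bdd_below_def by auto
  show ?thesis
  proof (rule that[of "max 0 (- b)"])
    show "x i = 0" if "i < - max 0 (- b)" for i
      using b[of i] that by linarith
  qed simp
qed

lemma add_subgroup_subset_lpoly: "add_subgroup I \<Longrightarrow> I \<subseteq> lpoly"
  by (simp add: add_subgroup_def)

lemma add_subgroup_add_closed:
  assumes "add_subgroup I" "x \<in> I" "y \<in> I"
  shows "(\<lambda>n. x n + y n) \<in> I"
proof -
  have zero: "(\<lambda>_. 0) \<in> I"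
    and diff: "\<And>u v. u \<in> I \<Longrightarrow> v \<in> I \<Longrightarrow> (\<lambda>n. u n - v n) \<in> I"
    using assms(1) unfolding add_subgroup_def by auto
  have "(\<lambda>n. 0 - y n) \<in> I" using diff[OF zero assms(3)] .
  from diff[OF assms(2) this] show ?thesis by simp
qed

lemma add_subgroup_sum_closed:
  fixes N :: nat
  assumes "add_subgroup I" "\<And>k. k < N \<Longrightarrow> c k \<in> I"
  shows "(\<lambda>n. \<Sum>k<N. c k n) \<in> I"
  using assms(2)
proof (induction N)
  case 0
  then show ?case using assms(1) by (simp add: add_subgroup_def)
next
  case (Suc N)
  then have "(\<lambda>n. (\<Sum>k<N. c k n) + c N n) \<in> I"
    using add_subgroup_add_closed[OF assms(1)] by simp
  then show ?case by simp
qed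

lemma lmult_in_set_prod: "a \<in> A \<Longrightarrow> b \<in> B \<Longrightarrow> lmult \<sigma> a b \<in> set_prod \<sigma> A B"
  unfolding set_prod_def
  by (rule CollectI, rule exI[of _ 1], rule exI[of _ "\<lambda>_. a"], rule exI[of _ "\<lambda>_. b"]) auto

lemma set_prod_subset:
  assumes "add_subgroup I" "\<And>a b. a \<in> A \<Longrightarrow> b \<in> B \<Longrightarrow> lmult \<sigma> a b \<in> I"
  shows "set_prod \<sigma> A B \<subseteq> I"
proof
  fix x assume "x \<in> set_prod \<sigma> A B"
  then obtain N :: nat and a b where "x = (\<lambda>n. \<Sum>k<N. lmult \<sigma> (a k) (b k) n)"
    and "\<forall>k<N. a k \<in> A \<and> b k \<in> B"
    unfolding set_prod_def by blast
  then show "x \<in> I" using add_subgroup_sum_closed[OF assms(1)] assms(2) by simp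
qed

context
  fixes \<sigma> :: "'a::nonassoc_ring_1 \<Rightarrow> 'a"
  assumes bij: "bij \<sigma>" and map_0: "\<sigma> 0 = 0" and map_1: "\<sigma> 1 = 1"
begin

lemma sig_pow_0: "sig_pow \<sigma> k 0 = 0"
  by (rule sig_pow_fixed_point[OF bij_is_inj[OF bij] map_0])

lemma sig_pow_1: "sig_pow \<sigma> k 1 = 1"
  by (rule sig_pow_fixed_point[OF bij_is_inj[OF bij] map_1])

lemma left_ideal_elem_eq_shift:
  assumes "left_ideal \<sigma> I" "x \<in> I"
  obtains m y where "y \<in> I \<inter> tpoly" "x = lmult \<sigma> (xpow (- m)) y"
proof -
  have sub: "add_subgroup I" and mult: "\<And>s x. s \<in> lpoly \<Longrightarrow> x \<in> I \<Longrightarrow> lmult \<sigma> s x \<in> I"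
    using assms(1) unfolding left_ideal_def by auto
  have x: "x \<in> lpoly" using assms(2) add_subgroup_subset_lpoly[OF sub] by blast
  obtain m where m: "0 \<le> m" "\<And>i. i < - m \<Longrightarrow> x i = 0"
    using lpoly_support_bounded_below[OF x] by blast
  define y where "y = lmult \<sigma> (xpow m) x"
  have y: "y n = sig_pow \<sigma> m (x (n - m))" for n
    unfolding y_def by (rule lmult_xpow_left)
  have "y \<in> I" unfolding y_def by (rule mult[OF xpow_in_lpoly assms(2)])
  moreover have "y \<in> lpoly" using \<open>y \<in> I\<close> add_subgroup_subset_lpoly[OF sub] by blast
  moreover have "y i = 0" if "i < 0" for i
    using that by (simp add: y m(2) sig_pow_0)
  ultimately have "y \<in> I \<inter> tpoly" unfolding tpoly_def by blast
  moreover have "x = lmult \<sigma> (xpow (- m)) y"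
    by (rule ext) (simp add: lmult_xpow_left y sig_pow_neg_cancel[OF bij m(1)])
  ultimately show ?thesis by (rule that)
qed

lemma right_ideal_elem_eq_shift:
  assumes "right_ideal \<sigma> I" "x \<in> I"
  obtains m y where "y \<in> I \<inter> tpoly" "x = lmult \<sigma> y (xpow (- m))"
proof -
  have sub: "add_subgroup I" and mult: "\<And>s x. s \<in> lpoly \<Longrightarrow> x \<in> I \<Longrightarrow> lmult \<sigma> x s \<in> I"
    using assms(1) unfolding right_ideal_def by auto
  have x: "x \<in> lpoly" using assms(2) add_subgroup_subset_lpoly[OF sub] by blast
  obtain m where m: "0 \<le> m" "\<And>i. i < - m \<Longrightarrow> x i = 0"
    using lpoly_support_bounded_below[OF x] by blast
  define y where "y = lmult \<sigma> x (xpow m)"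
  have y: "y n = x (n - m)" for n
    unfolding y_def using x sig_pow_0 sig_pow_1 by (rule lmult_xpow_right)
  have "y \<in> I" unfolding y_def by (rule mult[OF xpow_in_lpoly assms(2)])
  then have "y \<in> lpoly" using add_subgroup_subset_lpoly[OF sub] by blast
  with \<open>y \<in> I\<close> have "y \<in> I \<inter> tpoly" unfolding tpoly_def by (auto simp: y m(2))
  moreover have "x = lmult \<sigma> y (xpow (- m))"
    by (rule ext) (simp add: lmult_xpow_right[OF \<open>y \<in> lpoly\<close> sig_pow_0 sig_pow_1] y)
  ultimately show ?thesis by (rule that)
qed

lemma left_ideal_eq_set_prod:
  assumes "left_ideal \<sigma> I"
  shows "I = set_prod \<sigma> lpoly (I \<inter> tpoly)"
proof
  show "I \<subseteq> set_prod \<sigma> lpoly (I \<inter> tpoly)"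
    by (metis assms left_ideal_elem_eq_shift lmult_in_set_prod subsetI xpow_in_lpoly)
  show "set_prod \<sigma> lpoly (I \<inter> tpoly) \<subseteq> I"
    using assms unfolding left_ideal_def by (intro set_prod_subset) auto
qed

lemma right_ideal_eq_set_prod:
  assumes "right_ideal \<sigma> I"
  shows "I = set_prod \<sigma> (I \<inter> tpoly) lpoly"
proof
  show "I \<subseteq> set_prod \<sigma> (I \<inter> tpoly) lpoly"
    by (metis assms right_ideal_elem_eq_shift lmult_in_set_prod subsetI xpow_in_lpoly)
  show "set_prod \<sigma> (I \<inter> tpoly) lpoly \<subseteq> I"
    using assms unfolding right_ideal_def by (intro set_prod_subset) auto
qed

end

theorem proposition17:
  fixes \<sigma> :: "'a::nonassoc_ring_1 \<Rightarrow> 'a" and I :: "(int \<Rightarrow> 'a) set"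
  assumes "\<forall>x y. \<sigma> (x + y) = \<sigma> x + \<sigma> y"
    and "bij \<sigma>"
    and "\<sigma> 1 = 1"
  shows "(left_ideal \<sigma> I \<longrightarrow> I = set_prod \<sigma> lpoly (I \<inter> tpoly))
       \<and> (right_ideal \<sigma> I \<longrightarrow> I = set_prod \<sigma> (I \<inter> tpoly) lpoly)"
  using left_ideal_eq_set_prod right_ideal_eq_set_prod
    additive_map_zero[OF assms(1)] assms(2,3) by blast

end
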